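(* Let $\mathcal G$ be a connected noncompact metric graph and consider the critical energy ($p=6$). Then: (i) if $\mu\le\mu_{\mathcal G}$, then $\mathcal E_{\mathcal G}(\mu)=0$, and it is not attained when $\mu<\mu_{\mathcal G}$; (ii) if $\mu>\mu_{\mathcal G}$, then $\mathcal E_{\mathcal G}(\mu)<0$ (possibly $-\infty$); (iii) if $\mu>\mu_{\mathbb R}$, then $\mathcal E_{\mathcal G}(\mu)=-\infty$.
   Context: Metric graphs have finitely many edges and vertices, bounded edges identified with $[0,\ell_e]$ and halflines with $[0,\infty)$; noncompact means at least one halfline. $H^1(\mathcal G)$: continuous functions on $\mathcal G$, $H^1$ on each edge; $H^1_\mu(\mathcal G)$ those with $\|u\|_{L^2(\mathcal G)}^2=\mu$. $E(u,\mathcal G)=\frac12\int_{\mathcal G}|u'|^2-\frac16\int_{\mathcal G}|u|^6$ and $\mathcal E_{\mathcal G}(\mu)=\inf_{H^1_\mu(\mathcal G)}E(\cdot,\mathcal G)$. $K_{\mathcal G}=\sup_{u\in H^1(\mathcal G),u\ne0}\frac{\|u\|_6^6}{\|u\|_2^4\|u'\|_2^2}$ is the best Gagliardo–Nirenberg constant on $\mathcal G$, and the critical mass is $\mu_{\mathcal G}=\sqrt{3/K_{\mathcal G}}$; in particular $\mu_{\mathbb R}=\sqrt{3/K_{\mathbb R}}=\pi\sqrt3/2$. *)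

theory Defs
  imports "HOL-Analysis.Analysis"
begin

text \<open>Vertices are 0..<n_vert; bounded edges are 0..<n_bdd, edge e joins vertex
  b_src e (at coordinate 0) to vertex b_tgt e (at coordinate b_len e),
  identified with [0, b_len e]; halflines are 0..<n_half, halfline j is
  identified with [0,\<infinity>) and attached at coordinate 0 to vertex h_vert j.
  Multiple edges and self-loops are allowed.\<close>

record mgraph =
  n_vert :: nat
  n_bdd  :: nat
  b_len  :: "nat \<Rightarrow> real"
  b_src  :: "nat \<Rightarrow> nat"
  b_tgt  :: "nat \<Rightarrow> nat"
  n_half :: nat
  h_vert :: "nat \<Rightarrow> nat"

definition wf_mgraph :: "mgraph \<Rightarrow> bool" where
  "wf_mgraph G \<longleftrightarrow>
     (\<forall>e<n_bdd G. 0 < b_len G e \<and> b_src G e < n_vert G \<and> b_tgt G e < n_vert G) \<and>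
     (\<forall>j<n_half G. h_vert G j < n_vert G)"

definition edges :: "mgraph \<Rightarrow> (nat + nat) set" where
  "edges G = Inl ` {..<n_bdd G} \<union> Inr ` {..<n_half G}"

definition edom :: "mgraph \<Rightarrow> nat + nat \<Rightarrow> real set" where
  "edom G k = (case k of Inl e \<Rightarrow> {0..b_len G e} | Inr j \<Rightarrow> {0..})"

definition adj :: "mgraph \<Rightarrow> (nat \<times> nat) set" where
  "adj G = {(b_src G e, b_tgt G e) | e. e < n_bdd G} \<union> {(b_tgt G e, b_src G e) | e. e < n_bdd G}"

definition connected_mgraph :: "mgraph \<Rightarrow> bool" where
  "connected_mgraph G \<longleftrightarrow> (\<forall>v<n_vert G. \<forall>w<n_vert G. (v, w) \<in> (adj G)\<^sup>*)"

definition noncompact_mgraph :: "mgraph \<Rightarrow> bool" where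
  "noncompact_mgraph G \<longleftrightarrow> 0 < n_half G"

text \<open>A function on the graph is a family u k of real functions on the edges (only the
  values on edom G k matter). u is in H^1(G) with derivative g (g is a weak derivative,
  determined a.e.) if on each edge u, g are square integrable and u is the integral of g
  (i.e. u is absolutely continuous with u' = g a.e.), and u is continuous at vertices.\<close>

definition H1_edge :: "real set \<Rightarrow> (real \<Rightarrow> real) \<Rightarrow> (real \<Rightarrow> real) \<Rightarrow> bool" where
  "H1_edge D f g \<longleftrightarrow>
     set_integrable lborel D (\<lambda>x. (f x)\<^sup>2) \<and> set_integrable lborel D (\<lambda>x. (g x)\<^sup>2) \<and>
     (\<forall>x\<in>D. set_integrable lborel {0..x} g \<and> f x = f 0 + (\<integral>t\<in>{0..x}. g t \<partial>lborel))"

definition H1 :: "mgraph \<Rightarrow> (nat + nat \<Rightarrow> real \<Rightarrow> real) \<Rightarrow> (nat + nat \<Rightarrow> real \<Rightarrow> real) \<Rightarrow> bool" where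
  "H1 G u g \<longleftrightarrow>
     (\<forall>k\<in>edges G. H1_edge (edom G k) (u k) (g k)) \<and>
     (\<exists>\<phi> :: nat \<Rightarrow> real.
        (\<forall>e<n_bdd G. u (Inl e) 0 = \<phi> (b_src G e) \<and> u (Inl e) (b_len G e) = \<phi> (b_tgt G e)) \<and>
        (\<forall>j<n_half G. u (Inr j) 0 = \<phi> (h_vert G j)))"

definition L2sq :: "mgraph \<Rightarrow> (nat + nat \<Rightarrow> real \<Rightarrow> real) \<Rightarrow> real" where
  "L2sq G u = (\<Sum>k\<in>edges G. \<integral>x\<in>edom G k. (u k x)\<^sup>2 \<partial>lborel)"

definition L6pow :: "mgraph \<Rightarrow> (nat + nat \<Rightarrow> real \<Rightarrow> real) \<Rightarrow> real" where
  "L6pow G u = (\<Sum>k\<in>edges G. \<integral>x\<in>edom G k. \<bar>u k x\<bar> ^ 6 \<partial>lborel)"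

definition energy :: "mgraph \<Rightarrow> (nat + nat \<Rightarrow> real \<Rightarrow> real) \<Rightarrow> (nat + nat \<Rightarrow> real \<Rightarrow> real) \<Rightarrow> real" where
  "energy G u g = L2sq G g / 2 - L6pow G u / 6"

definition ground_level :: "mgraph \<Rightarrow> real \<Rightarrow> ereal" where
  "ground_level G \<mu> = (INF ug \<in> {(u, g). H1 G u g \<and> L2sq G u = \<mu>}. ereal (energy G (fst ug) (snd ug)))"

definition ground_level_attained :: "mgraph \<Rightarrow> real \<Rightarrow> bool" where
  "ground_level_attained G \<mu> \<longleftrightarrow>
     (\<exists>u g. H1 G u g \<and> L2sq G u = \<mu> \<and> ereal (energy G u g) = ground_level G \<mu>)"

definition GN_const :: "mgraph \<Rightarrow> ereal" where
  "GN_const G = (SUP ug \<in> {(u, g). H1 G u g \<and> 0 < L2sq G u}.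
      ereal (L6pow G (fst ug) / ((L2sq G (fst ug))\<^sup>2 * L2sq G (snd ug))))"

definition crit_mass :: "mgraph \<Rightarrow> real" where
  "crit_mass G = sqrt (3 / real_of_ereal (GN_const G))"

end

theory Submission
  imports Defs "HOL-Real_Asymp.Real_Asymp"
begin

text \<open>
  The Gagliardo--Nirenberg inequality \<open>\<parallel>u\<parallel>\<^sub>6\<^sup>6 \<le> K\<^sub>G \<parallel>u\<parallel>\<^sub>2\<^sup>4 \<parallel>u'\<parallel>\<^sub>2\<^sup>2\<close> gives
  \<open>E(u) \<ge> (3 - K\<^sub>G \<mu>\<^sup>2) \<parallel>u'\<parallel>\<^sub>2\<^sup>2 / 6\<close> at mass \<open>\<mu>\<close>, and on a connected graph with a halfline
  \<open>u' \<noteq> 0\<close> whenever \<open>u \<noteq> 0\<close>; so the energy is nonnegative up to the critical mass and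
  positive below it, which excludes minimisers there. The mass preserving dilations
  \<open>u \<mapsto> \<surd>l u(l\<cdot>)\<close> multiply the energy by \<open>l\<^sup>2\<close>: hence \<open>\<E>\<^sub>G(\<mu>) \<le> 0\<close> always,
  \<open>\<E>\<^sub>G(\<mu>) < 0\<close> as soon as one function beats the Gagliardo--Nirenberg quotient, and
  \<open>\<E>\<^sub>G(\<mu>) = -\<infinity>\<close> as soon as one function of mass \<open>\<mu>\<close> has negative energy. For
  \<open>\<mu> > \<pi>\<surd>3/2\<close> such a function lives on a single halfline: the soliton \<open>sqrt \<circ> sech\<close> of the
  line, truncated at \<open>\<plusminus>T\<close> and shifted onto the halfline. Its mass, kinetic energy and
  \<open>L\<^sup>6\<close> norm tend to \<open>\<pi>\<close>, \<open>\<pi>/8\<close>, \<open>\<pi>/2\<close> as \<open>T \<rightarrow> \<infinity>\<close>, so at mass \<open>\<mu>\<close> its energy tends to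
  \<open>\<mu>/16 - \<mu>\<^sup>3/(12\<pi>\<^sup>2) < 0\<close>.
\<close>

section \<open>The truncated soliton\<close>

definition gudermannian :: "real \<Rightarrow> real" where
  "gudermannian y = arctan (sinh y)"

lemma has_real_derivative_gudermannian [derivative_intros]:
  "(gudermannian has_real_derivative 1 / cosh y) (at y within S)"
proof -
  have "1 + (sinh y)^2 = (cosh y)^2" by (simp add: cosh_square_eq)
  then show ?thesis unfolding gudermannian_def [abs_def]
    by (auto intro!: derivative_eq_intros simp: power2_eq_square field_simps)
qed

lemma has_real_derivative_tanh' [derivative_intros]:
  "(tanh has_real_derivative 1 / (cosh y)^2) (at y within S)" for y :: real
proof -
  have "(cosh y)^2 - (sinh y)^2 = 1" by (simp add: cosh_square_eq)
  then show ?thesis unfolding tanh_def [abs_def]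
    by (auto intro!: derivative_eq_intros simp: power2_eq_square field_simps)
qed

text \<open>For \<open>c = sech T\<close> this is the soliton \<open>sqrt \<circ> sech\<close>, lowered so that it vanishes at \<open>\<plusminus>T\<close>.\<close>

definition trunc_soliton :: "real \<Rightarrow> real \<Rightarrow> real" where
  "trunc_soliton c y = 1 / sqrt (cosh y) - c * sqrt (cosh y)"

definition trunc_soliton' :: "real \<Rightarrow> real \<Rightarrow> real" where
  "trunc_soliton' c y = - sinh y * (1 / cosh y + c) / (2 * sqrt (cosh y))"

lemma has_real_derivative_trunc_soliton:
  "(trunc_soliton c has_real_derivative trunc_soliton' c y) (at y)"
proof -
  have "sqrt (cosh y) * sqrt (cosh y) = cosh y" by simp
  then show ?thesis unfolding trunc_soliton_def [abs_def] trunc_soliton'_def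
    by (auto intro!: derivative_eq_intros simp: field_simps) (meson cosh_real_pos not_less_iff_gr_or_eq)
qed

lemma continuous_on_trunc_soliton: "continuous_on S (trunc_soliton c)"
  using has_real_derivative_trunc_soliton
  by (meson DERIV_isCont continuous_at_imp_continuous_on)

lemma continuous_on_trunc_soliton': "continuous_on S (trunc_soliton' c)"
  unfolding trunc_soliton'_def by (auto intro!: continuous_intros simp: add_pos_nonneg)

lemma trunc_soliton_at_cutoff:
  "trunc_soliton (1 / cosh T) T = 0" "trunc_soliton (1 / cosh T) (-T) = 0"
proof -
  have "sqrt (cosh T) * sqrt (cosh T) = cosh T" by simp
  then show "trunc_soliton (1 / cosh T) T = 0" unfolding trunc_soliton_def by (simp add: field_simps)
  then show "trunc_soliton (1 / cosh T) (-T) = 0" unfolding trunc_soliton_def by simp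
qed

lemma trunc_soliton_sq: "(trunc_soliton c y)^2 = 1 / cosh y - 2 * c + c^2 * cosh y"
proof -
  have "sqrt (cosh y)^2 = cosh y" by simp
  then show ?thesis unfolding trunc_soliton_def by (simp add: field_simps power2_eq_square)
qed

lemma trunc_soliton'_sq:
  "(trunc_soliton' c y)^2 = (1 / cosh y + 2 * c + c^2 * cosh y
     - 1 / (cosh y)^3 - 2 * c / (cosh y)^2 - c^2 / cosh y) / 4"
proof -
  have "sqrt (cosh y)^2 = cosh y" "(sinh y)^2 = (cosh y)^2 - 1" by (simp_all add: cosh_square_eq)
  then show ?thesis unfolding trunc_soliton'_def
    by (simp add: power_divide power_mult_distrib field_simps) algebra
qed

lemma trunc_soliton_pow6:
  "(trunc_soliton c y)^6 = 1 / (cosh y)^3 - 6 * c / (cosh y)^2 + 15 * c^2 / cosh y - 20 * c^3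
     + 15 * c^4 * cosh y - 6 * c^5 * (cosh y)^2 + c^6 * (cosh y)^3"
proof -
  have "(trunc_soliton c y)^6 = ((trunc_soliton c y)^2)^3" by simp
  then show ?thesis unfolding trunc_soliton_sq by (simp add: field_simps) algebra
qed

definition sq_antideriv :: "real \<Rightarrow> real \<Rightarrow> real" where
  "sq_antideriv c y = gudermannian y - 2 * c * y + c^2 * sinh y"

definition deriv_sq_antideriv :: "real \<Rightarrow> real \<Rightarrow> real" where
  "deriv_sq_antideriv c y = (gudermannian y + 2 * c * y + c^2 * sinh y
     - (sinh y / (cosh y)^2 + gudermannian y) / 2 - 2 * c * tanh y - c^2 * gudermannian y) / 4"

definition pow6_antideriv :: "real \<Rightarrow> real \<Rightarrow> real" where
  "pow6_antideriv c y = (sinh y / (cosh y)^2 + gudermannian y) / 2 - 6 * c * tanh y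
     + 15 * c^2 * gudermannian y - 20 * c^3 * y + 15 * c^4 * sinh y
     - 3 * c^5 * (y + sinh y * cosh y) + c^6 * (sinh y + (sinh y)^3 / 3)"

lemma has_real_derivative_sq_antideriv:
  "(sq_antideriv c has_real_derivative (trunc_soliton c y)^2) (at y)"
  unfolding sq_antideriv_def [abs_def] trunc_soliton_sq
  by (auto intro!: derivative_eq_intros)

lemma has_real_derivative_deriv_sq_antideriv:
  "(deriv_sq_antideriv c has_real_derivative (trunc_soliton' c y)^2) (at y)"
proof -
  have "(sinh y)^2 = (cosh y)^2 - 1" by (simp add: cosh_square_eq)
  then show ?thesis unfolding deriv_sq_antideriv_def [abs_def] trunc_soliton'_sq
    by (auto intro!: derivative_eq_intros simp: field_simps power2_eq_square power3_eq_cube) algebra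
qed

lemma has_real_derivative_pow6_antideriv:
  "(pow6_antideriv c has_real_derivative (trunc_soliton c y)^6) (at y)"
proof -
  have "(sinh y)^2 = (cosh y)^2 - 1" by (simp add: cosh_square_eq)
  then show ?thesis unfolding pow6_antideriv_def [abs_def] trunc_soliton_pow6
    by (auto intro!: derivative_eq_intros simp: field_simps power2_eq_square power3_eq_cube) algebra
qed

definition trunc_soliton_L2sq :: "real \<Rightarrow> real" where
  "trunc_soliton_L2sq T = sq_antideriv (1 / cosh T) T - sq_antideriv (1 / cosh T) (-T)"

definition trunc_soliton'_L2sq :: "real \<Rightarrow> real" where
  "trunc_soliton'_L2sq T = deriv_sq_antideriv (1 / cosh T) T - deriv_sq_antideriv (1 / cosh T) (-T)"

definition trunc_soliton_L6pow :: "real \<Rightarrow> real" where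
  "trunc_soliton_L6pow T = pow6_antideriv (1 / cosh T) T - pow6_antideriv (1 / cosh T) (-T)"

text \<open>The limits are the mass, kinetic energy and \<open>L\<^sup>6\<close> norm of \<open>sqrt \<circ> sech\<close> on the line.\<close>

lemma trunc_soliton_L2sq_tendsto: "(trunc_soliton_L2sq \<longlongrightarrow> pi) at_top"
  unfolding trunc_soliton_L2sq_def [abs_def] sq_antideriv_def gudermannian_def by real_asymp

lemma trunc_soliton'_L2sq_tendsto: "(trunc_soliton'_L2sq \<longlongrightarrow> pi / 8) at_top"
  unfolding trunc_soliton'_L2sq_def [abs_def] deriv_sq_antideriv_def gudermannian_def tanh_def
  by real_asymp

lemma trunc_soliton_L6pow_tendsto: "(trunc_soliton_L6pow \<longlongrightarrow> pi / 2) at_top"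
  unfolding trunc_soliton_L6pow_def [abs_def] pow6_antideriv_def gudermannian_def tanh_def
  by real_asymp

lemma eventually_trunc_soliton_integrals_pos:
  "eventually (\<lambda>T. 0 < T \<and> 0 < trunc_soliton_L2sq T \<and> 0 < trunc_soliton'_L2sq T
      \<and> 0 < trunc_soliton_L6pow T) at_top"
proof -
  have "eventually (\<lambda>T. 0 < trunc_soliton_L2sq T) at_top"
    "eventually (\<lambda>T. 0 < trunc_soliton'_L2sq T) at_top"
    "eventually (\<lambda>T. 0 < trunc_soliton_L6pow T) at_top"
    by (auto intro: order_tendstoD(1) trunc_soliton_L2sq_tendsto trunc_soliton'_L2sq_tendsto
        trunc_soliton_L6pow_tendsto)
  then show ?thesis using eventually_gt_at_top [of 0] by eventually_elim auto
qed

section \<open>Test functions supported on a halfline\<close>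

lemma set_integral_Icc_FTC:
  fixes f F :: "real \<Rightarrow> real"
  assumes "a \<le> b" and "\<And>x. (F has_real_derivative f x) (at x)" and "continuous_on {a..b} f"
  shows "(LINT x:{a..b}|lborel. f x) = F b - F a"
proof -
  have "(LBINT x=a..b. f x) = F b - F a"
    using assms by (intro interval_integral_FTC_finite)
      (auto simp: has_real_derivative_iff_has_vector_derivative [symmetric]
            intro: has_field_derivative_at_within)
  then show ?thesis using assms(1) by (simp add: interval_integral_Icc)
qed

lemma set_integral_Icc_rescaled_FTC:
  fixes f F :: "real \<Rightarrow> real"
  assumes "0 < l" and "a \<le> b" and "\<And>y. (F has_real_derivative f y) (at y)"
    and "continuous_on UNIV f"
  shows "(LINT x:{a..b}|lborel. f (l * x + d)) = (F (l * b + d) - F (l * a + d)) / l"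
proof -
  have "((\<lambda>x. F (l * x + d) / l) has_real_derivative f (l * x + d)) (at x)" for x
    using assms(1) by (auto intro!: derivative_eq_intros DERIV_chain2 [OF assms(3)])
  moreover have "continuous_on {a..b} (\<lambda>x. f (l * x + d))"
    by (intro continuous_on_compose2 [OF assms(4)] continuous_intros) auto
  ultimately have "(LINT x:{a..b}|lborel. f (l * x + d)) = F (l * b + d) / l - F (l * a + d) / l"
    by (rule set_integral_Icc_FTC [OF assms(2)])
  then show ?thesis by (simp add: diff_divide_distrib)
qed

lemma set_integral_trunc_soliton_dilation:
  assumes "0 < l" and "0 \<le> T"
  shows "(LINT x:{0..2 * T / l}|lborel. (a * trunc_soliton (1 / cosh T) (l * x - T))^2)
      = a^2 * trunc_soliton_L2sq T / l"
    and "(LINT x:{0..2 * T / l}|lborel. (a * l * trunc_soliton' (1 / cosh T) (l * x - T))^2)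
      = a^2 * l * trunc_soliton'_L2sq T"
    and "(LINT x:{0..2 * T / l}|lborel. \<bar>a * trunc_soliton (1 / cosh T) (l * x - T)\<bar>^6)
      = a^6 * trunc_soliton_L6pow T / l"
proof -
  let ?c = "1 / cosh T"
  have rescale: "(LINT x:{0..2 * T / l}|lborel. f (l * x - T)) = (F T - F (- T)) / l"
    if "\<And>y. (F has_real_derivative f y) (at y)" and "continuous_on UNIV f" for F f
    using set_integral_Icc_rescaled_FTC [OF assms(1) _ that, where a = 0 and d = "- T"] assms
    by simp
  have "(LINT x:{0..2 * T / l}|lborel. (a * trunc_soliton ?c (l * x - T))^2)
      = (a^2 * sq_antideriv ?c T - a^2 * sq_antideriv ?c (- T)) / l"
    unfolding power_mult_distrib
    by (rule rescale) (auto intro!: DERIV_cmult has_real_derivative_sq_antideriv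
        continuous_intros continuous_on_trunc_soliton)
  also have "\<dots> = a^2 * trunc_soliton_L2sq T / l"
    unfolding trunc_soliton_L2sq_def by (simp add: right_diff_distrib)
  finally show "(LINT x:{0..2 * T / l}|lborel. (a * trunc_soliton ?c (l * x - T))^2)
      = a^2 * trunc_soliton_L2sq T / l" .
  have "(LINT x:{0..2 * T / l}|lborel. (a * l * trunc_soliton' ?c (l * x - T))^2)
      = (a^2 * l^2 * deriv_sq_antideriv ?c T - a^2 * l^2 * deriv_sq_antideriv ?c (- T)) / l"
    unfolding power_mult_distrib
    by (rule rescale) (auto intro!: DERIV_cmult has_real_derivative_deriv_sq_antideriv
        continuous_intros continuous_on_trunc_soliton')
  also have "\<dots> = a^2 * l * trunc_soliton'_L2sq T"
    unfolding trunc_soliton'_L2sq_def using assms(1) by (simp add: field_simps power2_eq_square)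
  finally show "(LINT x:{0..2 * T / l}|lborel. (a * l * trunc_soliton' ?c (l * x - T))^2)
      = a^2 * l * trunc_soliton'_L2sq T" .
  have "(LINT x:{0..2 * T / l}|lborel. \<bar>a * trunc_soliton ?c (l * x - T)\<bar>^6)
      = (LINT x:{0..2 * T / l}|lborel. a^6 * (trunc_soliton ?c (l * x - T))^6)"
    by (simp add: power_mult_distrib power_even_abs_numeral)
  also have "\<dots> = (a^6 * pow6_antideriv ?c T - a^6 * pow6_antideriv ?c (- T)) / l"
    by (rule rescale) (auto intro!: DERIV_cmult has_real_derivative_pow6_antideriv
        continuous_intros continuous_on_trunc_soliton)
  also have "\<dots> = a^6 * trunc_soliton_L6pow T / l"
    unfolding trunc_soliton_L6pow_def by (simp add: right_diff_distrib)
  finally show "(LINT x:{0..2 * T / l}|lborel. \<bar>a * trunc_soliton ?c (l * x - T)\<bar>^6)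
      = a^6 * trunc_soliton_L6pow T / l" .
qed

lemma
  fixes \<phi> :: "real \<Rightarrow> real"
  assumes "\<phi> 0 = 0"
  shows set_integrable_restrict_if:
      "set_integrable M S (\<lambda>x. \<phi> (if x \<in> A then f x else 0))
         \<longleftrightarrow> set_integrable M (S \<inter> A) (\<lambda>x. \<phi> (f x))"
    and set_integral_restrict_if:
      "(LINT x:S|M. \<phi> (if x \<in> A then f x else 0)) = (LINT x:S \<inter> A|M. \<phi> (f x))"
proof -
  have "(\<lambda>x. indicator S x *\<^sub>R \<phi> (if x \<in> A then f x else 0))
      = (\<lambda>x. indicator (S \<inter> A) x *\<^sub>R \<phi> (f x))"
    using assms by (auto simp: fun_eq_iff indicator_def)
  then show "set_integrable M S (\<lambda>x. \<phi> (if x \<in> A then f x else 0))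
      \<longleftrightarrow> set_integrable M (S \<inter> A) (\<lambda>x. \<phi> (f x))"
    and "(LINT x:S|M. \<phi> (if x \<in> A then f x else 0)) = (LINT x:S \<inter> A|M. \<phi> (f x))"
    by (simp_all add: set_integrable_def set_lebesgue_integral_def)
qed

lemma H1_edge_halfline_cutoff:
  fixes w w' :: "real \<Rightarrow> real"
  assumes "0 \<le> \<beta>" and deriv: "\<And>x. (w has_real_derivative w' x) (at x)"
    and cont: "continuous_on UNIV w'" and "w 0 = 0" and "w \<beta> = 0"
  shows "H1_edge {0..} (\<lambda>x. if x \<in> {0..\<beta>} then w x else 0) (\<lambda>x. if x \<in> {0..\<beta>} then w' x else 0)"
proof -
  have "continuous_on UNIV w"
    using deriv by (meson DERIV_isCont continuous_at_imp_continuous_on)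
  then have "set_integrable lborel ({0..} \<inter> {0..\<beta>}) (\<lambda>x. (w x)^2)"
    "set_integrable lborel ({0..} \<inter> {0..\<beta>}) (\<lambda>x. (w' x)^2)"
    using cont by (auto intro!: borel_integrable_atLeastAtMost' continuous_intros
        intro: continuous_on_subset)
  then have "set_integrable lborel {0..} (\<lambda>x. (if x \<in> {0..\<beta>} then w x else 0)^2)"
    "set_integrable lborel {0..} (\<lambda>x. (if x \<in> {0..\<beta>} then w' x else 0)^2)"
    by (simp_all add: set_integrable_restrict_if [where \<phi> = "\<lambda>y. y^2"] del: atLeastAtMost_iff)
  moreover have "set_integrable lborel {0..x} (\<lambda>t. if t \<in> {0..\<beta>} then w' t else 0)
      \<and> (if x \<in> {0..\<beta>} then w x else 0) = (if 0 \<in> {0..\<beta>} then w 0 else 0)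
          + (LINT t:{0..x}|lborel. if t \<in> {0..\<beta>} then w' t else 0)" if "0 \<le> x" for x
  proof -
    have Int: "{0..x} \<inter> {0..\<beta>} = {0..min x \<beta>}" by auto
    have "set_integrable lborel {0..min x \<beta>} w'"
      using cont by (auto intro: borel_integrable_atLeastAtMost' continuous_on_subset)
    moreover have "(LINT t:{0..min x \<beta>}|lborel. w' t) = w (min x \<beta>)"
      using set_integral_Icc_FTC [OF _ deriv continuous_on_subset [OF cont]] assms that by simp
    moreover have "(if x \<in> {0..\<beta>} then w x else 0) = w (min x \<beta>)"
      using assms that by (auto simp: min_def)
    ultimately show ?thesis
      using set_integrable_restrict_if [where \<phi> = "\<lambda>y. y" and S = "{0..x}" and A = "{0..\<beta>}"]
        set_integral_restrict_if [where \<phi> = "\<lambda>y. y" and S = "{0..x}" and A = "{0..\<beta>}"]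
        assms(1,4) unfolding Int by simp
  qed
  ultimately show ?thesis unfolding H1_edge_def by blast
qed

definition halfline_extension :: "nat \<Rightarrow> (real \<Rightarrow> real) \<Rightarrow> nat + nat \<Rightarrow> real \<Rightarrow> real" where
  "halfline_extension j f k = (if k = Inr j then f else (\<lambda>_. 0))"

lemma H1_halfline_extension:
  assumes "j < n_half G" and "H1_edge {0..} u g" and "u 0 = 0"
  shows "H1 G (halfline_extension j u) (halfline_extension j g)"
proof -
  have "H1_edge D (\<lambda>_. 0) (\<lambda>_. 0)" for D
    unfolding H1_edge_def set_integrable_def by simp
  then show ?thesis
    using assms unfolding H1_def halfline_extension_def
    by (intro conjI ballI exI [of _ "\<lambda>_. 0"]) (auto simp: edom_def)
qed

lemma sum_edges_halfline_extension:
  assumes "j < n_half G" and "\<And>k. \<Phi> k (\<lambda>_. 0) = 0"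
  shows "(\<Sum>k\<in>edges G. \<Phi> k (halfline_extension j f k)) = \<Phi> (Inr j) f"
proof -
  have "Inr j \<in> edges G" and "finite (edges G)"
    using assms(1) unfolding edges_def by auto
  then show ?thesis
    using assms(2) by (simp add: halfline_extension_def sum.delta' if_distrib [of "\<Phi> _"] cong: if_cong)
qed

lemma L2sq_halfline_extension:
  "j < n_half G \<Longrightarrow> L2sq G (halfline_extension j f) = (LINT x:{0..}|lborel. (f x)^2)"
  unfolding L2sq_def by (subst sum_edges_halfline_extension) (auto simp: edom_def)

lemma L6pow_halfline_extension:
  "j < n_half G \<Longrightarrow> L6pow G (halfline_extension j f) = (LINT x:{0..}|lborel. \<bar>f x\<bar>^6)"
  unfolding L6pow_def by (subst sum_edges_halfline_extension) (auto simp: edom_def)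

lemma trunc_soliton_test_function:
  assumes "0 < T" and "0 < l" and "j < n_half G"
  shows "\<exists>u g. H1 G u g \<and> L2sq G u = a^2 * trunc_soliton_L2sq T / l
    \<and> L2sq G g = a^2 * l * trunc_soliton'_L2sq T \<and> L6pow G u = a^6 * trunc_soliton_L6pow T / l"
proof -
  define \<beta> where "\<beta> = 2 * T / l"
  define w where "w x = a * trunc_soliton (1 / cosh T) (l * x - T)" for x
  define w' where "w' x = a * l * trunc_soliton' (1 / cosh T) (l * x - T)" for x
  define u where "u x = (if x \<in> {0..\<beta>} then w x else 0)" for x
  define g where "g x = (if x \<in> {0..\<beta>} then w' x else 0)" for x
  have \<beta>: "0 \<le> \<beta>" "l * \<beta> - T = T"
    using assms unfolding \<beta>_def by simp_all
  have "(w has_real_derivative w' x) (at x)" for x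
    unfolding w_def [abs_def] w'_def
    by (auto intro!: derivative_eq_intros DERIV_chain2 [OF has_real_derivative_trunc_soliton])
  moreover have "continuous_on UNIV w'"
    unfolding w'_def [abs_def]
    by (intro continuous_intros continuous_on_compose2 [OF continuous_on_trunc_soliton']) auto
  moreover have "w 0 = 0" "w \<beta> = 0"
    using trunc_soliton_at_cutoff \<beta> unfolding w_def by simp_all
  ultimately have "H1_edge {0..} u g"
    unfolding u_def [abs_def] g_def [abs_def] by (rule H1_edge_halfline_cutoff [OF \<beta>(1)])
  moreover have "u 0 = 0"
    using \<open>w 0 = 0\<close> unfolding u_def by simp
  ultimately have H1: "H1 G (halfline_extension j u) (halfline_extension j g)"
    by (rule H1_halfline_extension [OF assms(3)])
  have "(LINT x:{0..}|lborel. \<phi> (if x \<in> {0..\<beta>} then f x else 0))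
      = (LINT x:{0..\<beta>}|lborel. \<phi> (f x))" if "\<phi> 0 = 0" for \<phi> f :: "real \<Rightarrow> real"
    unfolding set_integral_restrict_if [where \<phi> = \<phi>, OF that] by (simp add: Int_absorb1)
  note restrict = this [where \<phi> = "\<lambda>y. y^2"] this [where \<phi> = "\<lambda>y. \<bar>y\<bar>^6"]
  note integrals = set_integral_trunc_soliton_dilation [OF assms(2) less_imp_le [OF assms(1)], of a]
  have "L2sq G (halfline_extension j u) = a^2 * trunc_soliton_L2sq T / l"
    using restrict(1) [of w] integrals(1)
    unfolding L2sq_halfline_extension [OF assms(3)] u_def w_def \<beta>_def by simp
  moreover have "L2sq G (halfline_extension j g) = a^2 * l * trunc_soliton'_L2sq T"
    using restrict(1) [of w'] integrals(2)
    unfolding L2sq_halfline_extension [OF assms(3)] g_def w'_def \<beta>_def by simp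
  moreover have "L6pow G (halfline_extension j u) = a^6 * trunc_soliton_L6pow T / l"
    using restrict(2) [of w] integrals(3)
    unfolding L6pow_halfline_extension [OF assms(3)] u_def w_def \<beta>_def by simp
  ultimately show ?thesis using H1 by blast
qed

section \<open>Functions with vanishing derivative\<close>

lemma emeasure_lborel_Ici: "emeasure lborel {c::real..} = \<infinity>"
proof (rule ccontr)
  assume "emeasure lborel {c..} \<noteq> \<infinity>"
  then obtain r where r: "emeasure lborel {c..} = ennreal r" "0 \<le> r"
    by (cases "emeasure lborel {c..}") auto
  have "emeasure lborel {c..c + r + 1} \<le> emeasure lborel {c..}"
    by (intro emeasure_mono) auto
  then show False using r by (simp add: ennreal_le_iff)
qed

lemma eq_0_if_set_integrable_Ici_const:
  fixes f :: "real \<Rightarrow> real"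
  assumes "set_integrable lborel {c..} f" and "\<And>x. c \<le> x \<Longrightarrow> f x = a"
  shows "a = 0"
proof -
  have "set_integrable lborel {c..} (\<lambda>_. a)"
    using assms(1) by (rule set_integrable_cong [OF refl refl, THEN iffD1, rotated]) (simp add: assms(2))
  then show ?thesis
    using emeasure_lborel_Ici [of c] by (auto simp: set_integrable_def integrable_indicator_iff)
qed

lemma H1_edge_const_if_deriv_L2sq_eq_0:
  assumes H: "H1_edge D f g" and "(LINT x:D|lborel. (g x)^2) = 0" and "D \<in> sets lborel"
    and "x \<in> D" and "{0..x} \<subseteq> D"
  shows "f x = f 0"
proof -
  have "integrable lborel (\<lambda>x. indicator D x *\<^sub>R (g x)^2)"
    using H unfolding H1_edge_def set_integrable_def by blast
  then have "AE x in lborel. indicator D x *\<^sub>R (g x)^2 = 0"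
    using assms(2) unfolding set_lebesgue_integral_def
    by (subst integral_nonneg_eq_0_iff_AE [symmetric]) (auto simp: indicator_def)
  then have "AE t in lborel. indicator {0..x} t *\<^sub>R g t = 0"
    by eventually_elim (use assms(5) in \<open>auto simp: indicator_def split: if_splits\<close>)
  then have "(LINT t:{0..x}|lborel. g t) = 0"
    unfolding set_lebesgue_integral_def by (rule integral_eq_zero_AE)
  then show "f x = f 0" using H assms(4) unfolding H1_edge_def by auto
qed

lemma connected_mgraph_vertex_fun_eq:
  assumes "connected_mgraph G" and "\<And>e. e < n_bdd G \<Longrightarrow> \<phi> (b_src G e) = \<phi> (b_tgt G e)"
    and "v < n_vert G" and "w < n_vert G"
  shows "\<phi> v = \<phi> w"
proof -
  have "(v, w) \<in> (adj G)\<^sup>*"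
    using assms(1,3,4) unfolding connected_mgraph_def by blast
  then show ?thesis
    by (induction rule: rtrancl_induct) (use assms(2) in \<open>auto simp: adj_def\<close>)
qed

lemma edom_sets [measurable]: "edom G k \<in> sets lborel"
  unfolding edom_def by (cases k) auto

lemma set_integral_sq_nonneg: "0 \<le> (LINT x:A|M. (f x)^2)" for f :: "_ \<Rightarrow> real"
  unfolding set_lebesgue_integral_def by (intro integral_nonneg_AE) (auto simp: indicator_def)

lemma L2sq_nonneg: "0 \<le> L2sq G u"
  unfolding L2sq_def by (intro sum_nonneg set_integral_sq_nonneg)

lemma H1_halfline_const_eq_0:
  assumes "H1 G u g" and "j < n_half G" and "\<And>x. 0 \<le> x \<Longrightarrow> u (Inr j) x = u (Inr j) 0"
  shows "u (Inr j) 0 = 0"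
proof -
  have "Inr j \<in> edges G"
    using assms(2) by (simp add: edges_def)
  then have "H1_edge {0..} (u (Inr j)) (g (Inr j))"
    using assms(1) unfolding H1_def by (auto simp: edom_def)
  then have "set_integrable lborel {0..} (\<lambda>x. (u (Inr j) x)^2)"
    unfolding H1_edge_def by (rule conjunct1)
  moreover have "(u (Inr j) x)^2 = (u (Inr j) 0)^2" if "0 \<le> x" for x
    using assms(3) [OF that] by simp
  ultimately have "(u (Inr j) 0)^2 = 0"
    by (rule eq_0_if_set_integrable_Ici_const)
  then show ?thesis by simp
qed

lemma H1_eq_0_if_L2sq_deriv_eq_0:
  assumes wf: "wf_mgraph G" and "connected_mgraph G" and "noncompact_mgraph G"
    and H: "H1 G u g" and "L2sq G g = 0"
  shows "\<forall>k\<in>edges G. \<forall>x\<in>edom G k. u k x = 0"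
proof -
  have "(LINT x:edom G k|lborel. (g k x)^2) = 0" if "k \<in> edges G" for k
    using assms(5) that unfolding L2sq_def
    by (subst (asm) sum_nonneg_eq_0_iff) (auto simp: edges_def set_integral_sq_nonneg)
  moreover have "{0..x} \<subseteq> edom G k" if "x \<in> edom G k" for k x
    using that unfolding edom_def by (cases k) auto
  moreover have edge: "H1_edge (edom G k) (u k) (g k)" if "k \<in> edges G" for k
    using H that unfolding H1_def by blast
  ultimately have const: "u k x = u k 0" if "k \<in> edges G" "x \<in> edom G k" for k x
    using that H1_edge_const_if_deriv_L2sq_eq_0 [OF edge _ edom_sets] by blast
  obtain \<phi> where \<phi>: "\<And>e. e < n_bdd G \<Longrightarrow> u (Inl e) 0 = \<phi> (b_src G e) \<and> u (Inl e) (b_len G e) = \<phi> (b_tgt G e)"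
    "\<And>j. j < n_half G \<Longrightarrow> u (Inr j) 0 = \<phi> (h_vert G j)"
    using H unfolding H1_def by blast
  have halfline: "u (Inr j) 0 = 0" if "j < n_half G" for j
  proof (rule H1_halfline_const_eq_0 [OF H that])
    fix x :: real
    assume "0 \<le> x"
    then show "u (Inr j) x = u (Inr j) 0"
      using that by (intro const) (auto simp: edges_def edom_def)
  qed
  have "\<phi> (b_src G e) = \<phi> (b_tgt G e)" if "e < n_bdd G" for e
    using const [of "Inl e" "b_len G e"] \<phi>(1) [OF that] wf that
    unfolding wf_mgraph_def edges_def edom_def by auto
  moreover obtain j where "j < n_half G"
    using assms(3) unfolding noncompact_mgraph_def by blast
  ultimately have "\<phi> v = 0" if "v < n_vert G" for v
    using connected_mgraph_vertex_fun_eq [OF assms(2), of \<phi> v "h_vert G j"] that halfline \<phi>(2) wf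
    unfolding wf_mgraph_def by auto
  then have "u k 0 = 0" if "k \<in> edges G" for k
    using that \<phi> halfline wf unfolding edges_def wf_mgraph_def by auto
  then show ?thesis using const by simp
qed

lemma L2sq_deriv_pos:
  assumes "wf_mgraph G" and "connected_mgraph G" and "noncompact_mgraph G"
    and "H1 G u g" and "0 < L2sq G u"
  shows "0 < L2sq G g"
proof (rule ccontr)
  assume "\<not> 0 < L2sq G g"
  then have "L2sq G g = 0" using L2sq_nonneg [of G g] by simp
  then have "\<forall>k\<in>edges G. \<forall>x\<in>edom G k. u k x = 0"
    using H1_eq_0_if_L2sq_deriv_eq_0 assms(1-4) by blast
  then have "L2sq G u = 0"
    unfolding L2sq_def
    by (intro sum.neutral ballI, subst set_lebesgue_integral_cong [OF edom_sets, where g = "\<lambda>_. 0"])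
      (auto simp: set_lebesgue_integral_def)
  with assms(5) show False by simp
qed

section \<open>The Gagliardo--Nirenberg constant and the critical mass\<close>

lemma H1_scale:
  assumes "H1 G u g"
  shows "H1 G (\<lambda>k x. s * u k x) (\<lambda>k x. s * g k x)"
proof -
  have "H1_edge D (\<lambda>x. s * f x) (\<lambda>x. s * f' x)" if "H1_edge D f f'" for D f f'
    using that unfolding H1_edge_def
    by (auto simp: power_mult_distrib algebra_simps)
  moreover obtain \<phi> where "\<forall>e<n_bdd G. u (Inl e) 0 = \<phi> (b_src G e) \<and> u (Inl e) (b_len G e) = \<phi> (b_tgt G e)"
    "\<forall>j<n_half G. u (Inr j) 0 = \<phi> (h_vert G j)"
    using assms unfolding H1_def by blast
  ultimately show ?thesis
    using assms unfolding H1_def by (intro conjI ballI exI [of _ "\<lambda>v. s * \<phi> v"]) auto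
qed

lemma L2sq_scale: "L2sq G (\<lambda>k x. s * u k x) = s^2 * L2sq G u"
  unfolding L2sq_def by (simp add: power_mult_distrib sum_distrib_left)

lemma L6pow_scale: "L6pow G (\<lambda>k x. s * u k x) = s^6 * L6pow G u"
  unfolding L6pow_def by (simp add: abs_mult power_mult_distrib power_even_abs_numeral sum_distrib_left)

lemma ground_level_le_energy:
  "H1 G u g \<Longrightarrow> L2sq G u = \<mu> \<Longrightarrow> ground_level G \<mu> \<le> ereal (energy G u g)"
  unfolding ground_level_def by (intro INF_lower2 [of "(u, g)"]) auto

lemma GN_const_ge:
  "H1 G u g \<Longrightarrow> 0 < L2sq G u \<Longrightarrow>
    ereal (L6pow G u / ((L2sq G u)^2 * L2sq G g)) \<le> GN_const G"
  unfolding GN_const_def by (intro SUP_upper2 [of "(u, g)"]) auto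

lemma L6pow_le_GN_const:
  assumes "GN_const G = ereal K" and "H1 G u g" and "0 < L2sq G u" and "0 < L2sq G g"
  shows "L6pow G u \<le> K * (L2sq G u)^2 * L2sq G g"
  using GN_const_ge [OF assms(2,3)] assms by (simp add: divide_le_eq mult_ac)

lemma GN_const_pos:
  assumes "noncompact_mgraph G"
  shows "0 < GN_const G"
proof -
  obtain j where j: "j < n_half G"
    using assms unfolding noncompact_mgraph_def by blast
  obtain T where T: "0 < T" "0 < trunc_soliton_L2sq T" "0 < trunc_soliton'_L2sq T" "0 < trunc_soliton_L6pow T"
    using eventually_happens' [OF trivial_limit_at_top_linorder eventually_trunc_soliton_integrals_pos]
    by blast
  obtain u g where "H1 G u g" "L2sq G u = trunc_soliton_L2sq T" "L2sq G g = trunc_soliton'_L2sq T"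
    "L6pow G u = trunc_soliton_L6pow T"
    using trunc_soliton_test_function [OF T(1) zero_less_one j, of 1] by auto
  then have "ereal (trunc_soliton_L6pow T / ((trunc_soliton_L2sq T)^2 * trunc_soliton'_L2sq T))
      \<le> GN_const G"
    using GN_const_ge [of G u g] T by simp
  moreover have "0 < trunc_soliton_L6pow T / ((trunc_soliton_L2sq T)^2 * trunc_soliton'_L2sq T)"
    using T by simp
  ultimately show ?thesis by (meson ereal_less(2) less_le_trans)
qed

lemma crit_mass_ereal: "crit_mass G = sqrt (3 / K)" if "GN_const G = ereal K"
  using that unfolding crit_mass_def by simp

text \<open>A junk value: \<open>real_of_ereal \<infinity> = 0\<close> and \<open>3 / 0 = 0\<close>.\<close>

lemma crit_mass_PInf: "GN_const G = \<infinity> \<Longrightarrow> crit_mass G = 0"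
  unfolding crit_mass_def by simp

lemma le_crit_mass_iff:
  assumes "0 < GN_const G" and "0 < \<mu>"
  shows "\<mu> \<le> crit_mass G \<longleftrightarrow> (\<exists>K. GN_const G = ereal K \<and> K * \<mu>^2 \<le> 3)"
proof (cases "GN_const G")
  case (real K)
  with assms have "0 < K" by simp
  have "\<mu> \<le> sqrt (3 / K) \<longleftrightarrow> \<mu>^2 \<le> 3 / K"
    using assms(2) real_le_rsqrt real_sqrt_le_iff [of "\<mu>^2" "3 / K"] by force
  with \<open>0 < K\<close> real show ?thesis by (simp add: crit_mass_ereal le_divide_eq mult.commute)
qed (use assms crit_mass_PInf in auto)

lemma less_crit_mass_iff:
  assumes "0 < GN_const G" and "0 < \<mu>"
  shows "\<mu> < crit_mass G \<longleftrightarrow> (\<exists>K. GN_const G = ereal K \<and> K * \<mu>^2 < 3)"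
proof (cases "GN_const G")
  case (real K)
  with assms have "0 < K" by simp
  have "\<mu> < sqrt (3 / K) \<longleftrightarrow> \<mu>^2 < 3 / K"
    using assms(2) real_less_rsqrt real_sqrt_less_iff [of "\<mu>^2" "3 / K"] by force
  with \<open>0 < K\<close> real show ?thesis by (simp add: crit_mass_ereal less_divide_eq mult.commute)
qed (use assms crit_mass_PInf in auto)

lemma crit_mass_less_iff:
  assumes "0 < GN_const G" and "0 < \<mu>"
  shows "crit_mass G < \<mu> \<longleftrightarrow> ereal (3 / \<mu>^2) < GN_const G"
proof -
  have "crit_mass G < \<mu> \<longleftrightarrow> \<not> (\<exists>K. GN_const G = ereal K \<and> K * \<mu>^2 \<le> 3)"
    using le_crit_mass_iff [OF assms] by (simp add: not_le [symmetric])
  also have "\<dots> \<longleftrightarrow> ereal (3 / \<mu>^2) < GN_const G"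
    using assms by (cases "GN_const G") (auto simp: divide_less_eq)
  finally show ?thesis .
qed

section \<open>The ground state energy\<close>

lemma energy_ge_GN_const:
  assumes "GN_const G = ereal K" and "H1 G u g" and "L2sq G u = \<mu>" and "0 < \<mu>"
    and "0 < L2sq G g"
  shows "(3 - K * \<mu>^2) * L2sq G g / 6 \<le> energy G u g"
  using L6pow_le_GN_const [OF assms(1,2) _ assms(5)] assms(3,4)
  unfolding energy_def by (simp add: field_simps)

lemma ground_level_nonneg:
  assumes "wf_mgraph G" and "connected_mgraph G" and "noncompact_mgraph G"
    and "GN_const G = ereal K" and "K * \<mu>^2 \<le> 3" and "0 < \<mu>"
  shows "0 \<le> ground_level G \<mu>"
  unfolding ground_level_def
proof (rule INF_greatest)
  fix ug assume "ug \<in> {(u, g). H1 G u g \<and> L2sq G u = \<mu>}"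
  then obtain u g where "ug = (u, g)" "H1 G u g" "L2sq G u = \<mu>" by auto
  then have "0 < L2sq G g"
    using L2sq_deriv_pos [OF assms(1-3)] assms(6) by simp
  with assms(5) have "0 \<le> (3 - K * \<mu>^2) * L2sq G g / 6" by simp
  also have "\<dots> \<le> energy G u g"
    using \<open>H1 G u g\<close> \<open>L2sq G u = \<mu>\<close> assms(6) \<open>0 < L2sq G g\<close>
    by (rule energy_ge_GN_const [OF assms(4)])
  finally show "0 \<le> ereal (energy G (fst ug) (snd ug))" using \<open>ug = (u, g)\<close> by simp
qed

lemma not_ground_level_attained:
  assumes "wf_mgraph G" and "connected_mgraph G" and "noncompact_mgraph G"
    and "GN_const G = ereal K" and "K * \<mu>^2 < 3" and "0 < \<mu>" and "ground_level G \<mu> = 0"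
  shows "\<not> ground_level_attained G \<mu>"
proof
  assume "ground_level_attained G \<mu>"
  then obtain u g where ug: "H1 G u g" "L2sq G u = \<mu>" and "energy G u g = 0"
    using assms(7) unfolding ground_level_attained_def by auto
  have "0 < L2sq G g"
    using L2sq_deriv_pos [OF assms(1-3) ug(1)] ug(2) assms(6) by simp
  with assms(5) have "0 < (3 - K * \<mu>^2) * L2sq G g / 6" by simp
  also have "\<dots> \<le> energy G u g"
    using ug assms(6) \<open>0 < L2sq G g\<close> by (rule energy_ge_GN_const [OF assms(4)])
  finally show False using \<open>energy G u g = 0\<close> by simp
qed

lemma ground_level_neg:
  assumes "ereal (3 / \<mu>^2) < GN_const G" and "0 < \<mu>"
  shows "ground_level G \<mu> < 0"
proof -
  obtain u g where H: "H1 G u g" "0 < L2sq G u"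
    and GN: "3 / \<mu>^2 < L6pow G u / ((L2sq G u)^2 * L2sq G g)"
    using assms(1) unfolding GN_const_def less_SUP_iff by auto
  define m where "m = L2sq G u"
  have "0 < L2sq G g"
    using GN L2sq_nonneg [of G g] assms(2) by (cases "L2sq G g = 0") auto
  with GN have GN': "3 * m^2 * L2sq G g < \<mu>^2 * L6pow G u"
    using H(2) assms(2) unfolding m_def by (simp add: field_simps)
  define s where "s = sqrt (\<mu> / m)"
  have s2: "s^2 = \<mu> / m"
    using H(2) assms(2) unfolding s_def m_def by simp
  have "s^6 = (s^2)^3" by (simp flip: power_mult)
  with s2 have s6: "s^6 = (\<mu> / m)^3" by simp
  have "L2sq G (\<lambda>k x. s * u k x) = \<mu>"
    using H(2) unfolding L2sq_scale s2 m_def by simp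
  then have "ground_level G \<mu> \<le> ereal (energy G (\<lambda>k x. s * u k x) (\<lambda>k x. s * g k x))"
    by (rule ground_level_le_energy [OF H1_scale [OF H(1)]])
  also have "energy G (\<lambda>k x. s * u k x) (\<lambda>k x. s * g k x)
      = (\<mu> / m) * (3 * m^2 * L2sq G g - \<mu>^2 * L6pow G u) / (6 * m^2)"
    unfolding energy_def L2sq_scale L6pow_scale s2 s6
    using H(2) by (simp add: m_def field_simps power2_eq_square power3_eq_cube)
  also have "ereal \<dots> < 0"
    using GN' H(2) assms(2) unfolding m_def by (simp add: divide_neg_pos mult_pos_neg)
  finally show ?thesis .
qed

definition trunc_soliton_energy :: "real \<Rightarrow> real \<Rightarrow> real" where
  "trunc_soliton_energy \<mu> T = \<mu> * trunc_soliton'_L2sq T / (2 * trunc_soliton_L2sq T)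
     - \<mu>^3 * trunc_soliton_L6pow T / (6 * (trunc_soliton_L2sq T)^3)"

lemma ground_level_le_trunc_soliton_energy:
  assumes "noncompact_mgraph G" and "0 < \<mu>" and "0 < T" and "0 < trunc_soliton_L2sq T" and "0 < l"
  shows "ground_level G \<mu> \<le> ereal (l^2 * trunc_soliton_energy \<mu> T)"
proof -
  obtain j where j: "j < n_half G"
    using assms(1) unfolding noncompact_mgraph_def by blast
  define a where "a = sqrt (\<mu> * l / trunc_soliton_L2sq T)"
  have a2: "a^2 = \<mu> * l / trunc_soliton_L2sq T"
    using assms unfolding a_def by simp
  have "a^6 = (a^2)^3" by (simp flip: power_mult)
  with a2 have a6: "a^6 = (\<mu> * l / trunc_soliton_L2sq T)^3" by simp
  obtain u g where "H1 G u g" and u: "L2sq G u = a^2 * trunc_soliton_L2sq T / l"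
    "L2sq G g = a^2 * l * trunc_soliton'_L2sq T" "L6pow G u = a^6 * trunc_soliton_L6pow T / l"
    using trunc_soliton_test_function [OF assms(3,5) j] by blast
  moreover have "L2sq G u = \<mu>"
    using assms unfolding u a2 by simp
  moreover have "energy G u g = l^2 * trunc_soliton_energy \<mu> T"
    unfolding energy_def trunc_soliton_energy_def u a2 a6
    using assms by (simp add: field_simps power2_eq_square power3_eq_cube)
  ultimately show ?thesis
    using ground_level_le_energy by metis
qed

lemma ground_level_le_0:
  assumes "noncompact_mgraph G" and "0 < \<mu>"
  shows "ground_level G \<mu> \<le> 0"
proof -
  obtain T where T: "0 < T" "0 < trunc_soliton_L2sq T"
    using eventually_happens' [OF trivial_limit_at_top_linorder eventually_trunc_soliton_integrals_pos]
    by blast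
  have "((\<lambda>l. ereal (l^2 * trunc_soliton_energy \<mu> T)) \<longlongrightarrow> ereal 0) (at_right 0)"
    by (intro tendsto_eq_intros) auto
  moreover have "eventually (\<lambda>l. ground_level G \<mu> \<le> ereal (l^2 * trunc_soliton_energy \<mu> T)) (at_right 0)"
    using eventually_at_right_less [of "0::real"]
    by eventually_elim (rule ground_level_le_trunc_soliton_energy [OF assms T])
  ultimately have "ground_level G \<mu> \<le> ereal 0"
    by (rule tendsto_lowerbound [OF _ _ trivial_limit_at_right_real])
  then show ?thesis by (simp add: zero_ereal_def)
qed

lemma trunc_soliton_energy_tendsto:
  "(trunc_soliton_energy \<mu> \<longlongrightarrow> \<mu> / 16 - \<mu>^3 / (12 * pi^2)) at_top"
proof -
  have "(trunc_soliton_energy \<mu> \<longlongrightarrow> \<mu> * (pi / 8) / (2 * pi) - \<mu>^3 * (pi / 2) / (6 * pi^3)) at_top"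
    unfolding trunc_soliton_energy_def [abs_def]
    by (intro tendsto_intros trunc_soliton_L2sq_tendsto trunc_soliton'_L2sq_tendsto
        trunc_soliton_L6pow_tendsto) auto
  then show ?thesis by (simp add: field_simps power2_eq_square power3_eq_cube)
qed

lemma ground_level_eq_MInf:
  assumes "noncompact_mgraph G" and "pi * sqrt 3 / 2 < \<mu>"
  shows "ground_level G \<mu> = -\<infinity>"
proof -
  have "0 < pi * sqrt 3 / 2" by simp
  with assms(2) have "0 < \<mu>" by linarith
  have "(pi * sqrt 3 / 2)^2 < \<mu>^2"
    using assms(2) by (intro power_strict_mono) auto
  then have "\<mu> / 16 - \<mu>^3 / (12 * pi^2) < 0"
    using \<open>0 < \<mu>\<close> by (simp add: power_mult_distrib power_divide field_simps power2_eq_square power3_eq_cube)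
  then have "eventually (\<lambda>T. trunc_soliton_energy \<mu> T < 0) at_top"
    by (rule order_tendstoD(2) [OF trunc_soliton_energy_tendsto])
  then obtain T where T: "0 < T" "0 < trunc_soliton_L2sq T" "trunc_soliton_energy \<mu> T < 0"
    using eventually_happens' [OF trivial_limit_at_top_linorder
        eventually_conj [OF eventually_trunc_soliton_integrals_pos]] by blast
  have "((\<lambda>l. ereal (l^2 * trunc_soliton_energy \<mu> T)) \<longlongrightarrow> -\<infinity>) at_top"
    using T(3) unfolding ereal_tendsto_simps2 [unfolded comp_def] by real_asymp
  moreover have "eventually (\<lambda>l. ground_level G \<mu> \<le> ereal (l^2 * trunc_soliton_energy \<mu> T)) at_top"
    using ground_level_le_trunc_soliton_energy [OF assms(1) \<open>0 < \<mu>\<close> T(1,2)]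
    by (auto intro: eventually_at_top_linorderI [of 1])
  ultimately have "ground_level G \<mu> \<le> -\<infinity>"
    by (rule tendsto_lowerbound [OF _ _ trivial_limit_at_top_linorder])
  then show ?thesis by simp
qed

theorem proposition7p1:
  fixes G :: mgraph and \<mu> :: real
  assumes "wf_mgraph G" and "connected_mgraph G" and "noncompact_mgraph G"
    and "0 < \<mu>"
  shows "(\<mu> \<le> crit_mass G \<longrightarrow> ground_level G \<mu> = 0)
       \<and> (\<mu> < crit_mass G \<longrightarrow> \<not> ground_level_attained G \<mu>)
       \<and> (crit_mass G < \<mu> \<longrightarrow> ground_level G \<mu> < 0)
       \<and> (pi * sqrt 3 / 2 < \<mu> \<longrightarrow> ground_level G \<mu> = -\<infinity>)"
proof (intro conjI impI)
  have GN: "0 < GN_const G"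
    using GN_const_pos [OF assms(3)] .
  show zero: "ground_level G \<mu> = 0" if "\<mu> \<le> crit_mass G"
  proof (rule antisym)
    show "ground_level G \<mu> \<le> 0"
      using ground_level_le_0 [OF assms(3,4)] .
    show "0 \<le> ground_level G \<mu>"
      using that le_crit_mass_iff [OF GN assms(4)] ground_level_nonneg [OF assms(1-3) _ _ assms(4)]
      by blast
  qed
  show "\<not> ground_level_attained G \<mu>" if "\<mu> < crit_mass G"
    using that less_crit_mass_iff [OF GN assms(4)] zero
      not_ground_level_attained [OF assms(1-3) _ _ assms(4)] by auto
  show "ground_level G \<mu> < 0" if "crit_mass G < \<mu>"
    using that crit_mass_less_iff [OF GN assms(4)] ground_level_neg assms(4) by blast
  show "ground_level G \<mu> = -\<infinity>" if "pi * sqrt 3 / 2 < \<mu>"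
    using ground_level_eq_MInf [OF assms(3) that] .
qed

end
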